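(* Let $\mathcal{X}$ be a finite set and $\pi$ a probability mass function on $\mathcal{X}$ with full support. Let groups $\mathcal{G}_1,\mathcal{G}_2$ act on $\mathcal{X}$ with orbits $(\mathcal{O}_i)_{i=1}^{k_1}$ and $(\mathcal{C}_j)_{j=1}^{k_2}$, Gibbs orbit kernels $G_1,G_2$, and let $S_1,S_2\subseteq\ell^2(\pi)$ be the subspaces onto which $G_1,G_2$ project. Let $T$ be the $k_2\times k_1$ matrix $T(j,i)=\pi(\mathcal{O}_i\cap\mathcal{C}_j)/\sqrt{\pi(\mathcal{O}_i)\pi(\mathcal{C}_j)}$. Then the cosine $c(S_1,S_2)=\sigma_2(T)$, the largest singular value of $T$ less than $1$. If all singular values of $T$ are $1$, then $c(S_1,S_2)=0$ and $G_1G_2=G_2G_1=G_\infty$.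
   Context: $\ell^2(\pi)$ has inner product $\langle f,g\rangle_\pi=\sum_xf(x)g(x)\pi(x)$; $\pi(A)=\sum_{z\in A}\pi(z)$. The Gibbs kernel of a group action with orbit $\mathcal{O}(x)$ of $x$ is $G(x,y)=\pi(y)/\pi(\mathcal{O}(x))$ for $y\in\mathcal{O}(x)$ and $0$ otherwise; it is the $\ell^2(\pi)$-orthogonal projection onto the functions constant on each orbit. $G_\infty$ denotes the orthogonal projection onto $S_1\cap S_2$. The cosine is $c(S_1,S_2)=\sup\{\langle f,h\rangle_\pi: f\in S_1\cap(S_1\cap S_2)^\perp,\ h\in S_2\cap(S_1\cap S_2)^\perp,\ \|f\|_\pi,\|h\|_\pi\le1\}$, which equals the operator norm $\|G_1G_2-G_\infty\|_{\ell^2(\pi)\to\ell^2(\pi)}$. Singular values of $T$ are listed in non-increasing order $\sigma_1(T)\ge\sigma_2(T)\ge\cdots$. *)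

theory Defs
  imports "HOL-Algebra.Group_Action" "Jordan_Normal_Form.Char_Poly"
begin

text \<open>The finite state space is the finite type 'a; functions 'a \<Rightarrow> real form l2(pi).\<close>

definition pi_set :: "('a \<Rightarrow> real) \<Rightarrow> 'a set \<Rightarrow> real" where
  "pi_set \<pi> A = (\<Sum>z\<in>A. \<pi> z)"

definition inner_pi :: "('a::finite \<Rightarrow> real) \<Rightarrow> ('a \<Rightarrow> real) \<Rightarrow> ('a \<Rightarrow> real) \<Rightarrow> real" where
  "inner_pi \<pi> f g = (\<Sum>x\<in>UNIV. f x * g x * \<pi> x)"

definition norm_pi :: "('a::finite \<Rightarrow> real) \<Rightarrow> ('a \<Rightarrow> real) \<Rightarrow> real" where
  "norm_pi \<pi> f = sqrt (inner_pi \<pi> f f)"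

definition orth_pi :: "('a::finite \<Rightarrow> real) \<Rightarrow> ('a \<Rightarrow> real) set \<Rightarrow> ('a \<Rightarrow> real) set" where
  "orth_pi \<pi> S = {f. \<forall>g\<in>S. inner_pi \<pi> f g = 0}"

definition gibbs_kernel ::
  "('a \<Rightarrow> real) \<Rightarrow> ('g, 'm) monoid_scheme \<Rightarrow> ('g \<Rightarrow> 'a \<Rightarrow> 'a) \<Rightarrow> 'a \<Rightarrow> 'a \<Rightarrow> real" where
  "gibbs_kernel \<pi> G \<phi> x y =
     (if y \<in> orbit G \<phi> x then \<pi> y / pi_set \<pi> (orbit G \<phi> x) else 0)"

definition gibbs_op ::
  "('a::finite \<Rightarrow> real) \<Rightarrow> ('g, 'm) monoid_scheme \<Rightarrow> ('g \<Rightarrow> 'a \<Rightarrow> 'a) \<Rightarrow> ('a \<Rightarrow> real) \<Rightarrow> ('a \<Rightarrow> real)" where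
  "gibbs_op \<pi> G \<phi> f = (\<lambda>x. \<Sum>y\<in>UNIV. gibbs_kernel \<pi> G \<phi> x y * f y)"

definition gibbs_space ::
  "('a::finite \<Rightarrow> real) \<Rightarrow> ('g, 'm) monoid_scheme \<Rightarrow> ('g \<Rightarrow> 'a \<Rightarrow> 'a) \<Rightarrow> ('a \<Rightarrow> real) set" where
  "gibbs_space \<pi> G \<phi> = range (gibbs_op \<pi> G \<phi>)"

definition orth_proj :: "('a::finite \<Rightarrow> real) \<Rightarrow> ('a \<Rightarrow> real) set \<Rightarrow> ('a \<Rightarrow> real) \<Rightarrow> ('a \<Rightarrow> real)" where
  "orth_proj \<pi> S f = (THE g. g \<in> S \<and> f - g \<in> orth_pi \<pi> S)"

definition cosine :: "('a::finite \<Rightarrow> real) \<Rightarrow> ('a \<Rightarrow> real) set \<Rightarrow> ('a \<Rightarrow> real) set \<Rightarrow> real" where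
  "cosine \<pi> S1 S2 = Sup {inner_pi \<pi> f h | f h.
      f \<in> S1 \<inter> orth_pi \<pi> (S1 \<inter> S2) \<and> h \<in> S2 \<inter> orth_pi \<pi> (S1 \<inter> S2) \<and>
      norm_pi \<pi> f \<le> 1 \<and> norm_pi \<pi> h \<le> 1}"

text \<open>Singular values of a (m x n) real matrix T: square roots of the eigenvalues of the smaller
  Gram matrix (T^T T if n \<le> m, else T T^T), i.e. the min(m,n) singular values (as a set).\<close>
definition singular_values :: "real mat \<Rightarrow> real set" where
  "singular_values T =
     (let A = (if dim_col T \<le> dim_row T then transpose_mat T * T else T * transpose_mat T)
      in {sqrt e | e. eigenvalue A e})"

end

(*
  Both subspaces consist of the functions constant on the orbits, and the Gibbs kernels are the
  pi-weighted averages over orbits.  On S1 the operator A1 A2 is self-adjoint with Rayleigh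
  numerator <f, A1 A2 f> = |A2 f|^2.  Maximising |A2 f|^2 over the (compact) unit sphere of the
  orthogonal complement of S1 /\ S2 in S1 yields an eigenvector f0 of A1 A2 whose eigenvalue
  lam < 1 bounds every other eigenvalue below 1, and the cosine equals sqrt lam, attained at f0
  and A2 f0 / sqrt lam.  In the orthonormal bases of normalised orbit indicators the restriction
  of A2 to S1 has matrix T, so the eigenvalues of A1 A2 on S1 are those of T^T T, the squared
  singular values of T.  If none of them is below 1, minimising the Rayleigh quotient over S1
  shows that S1 is contained in S2 (or vice versa, for the smaller Gram matrix), and then both
  products of the projections equal the projection onto the intersection.
*)

theory Submission
  imports Defs "HOL-Analysis.Analysis" "Jordan_Normal_Form.Spectral_Radius"
begin

hide_const (open) Finite_Cartesian_Product.mat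

section \<open>The weighted inner product\<close>

lemma inner_pi_commute: "inner_pi \<pi> f g = inner_pi \<pi> g f"
  unfolding inner_pi_def by (simp add: mult.commute mult.left_commute)

lemma inner_pi_scale_left: "inner_pi \<pi> (\<lambda>x. c * f x) g = c * inner_pi \<pi> f g"
  unfolding inner_pi_def by (simp add: algebra_simps sum_distrib_left)

lemma inner_pi_scale_right: "inner_pi \<pi> f (\<lambda>x. c * g x) = c * inner_pi \<pi> f g"
  unfolding inner_pi_def by (simp add: algebra_simps sum_distrib_left)

lemma inner_pi_diff_left: "inner_pi \<pi> (\<lambda>x. f x - g x) h = inner_pi \<pi> f h - inner_pi \<pi> g h"
  unfolding inner_pi_def by (simp add: algebra_simps sum_subtractf)

lemma inner_pi_diff_right: "inner_pi \<pi> f (\<lambda>x. g x - h x) = inner_pi \<pi> f g - inner_pi \<pi> f h"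
  unfolding inner_pi_def by (simp add: algebra_simps sum_subtractf)

lemma inner_pi_add_scaled_left:
  "inner_pi \<pi> (\<lambda>x. f x + t * g x) h = inner_pi \<pi> f h + t * inner_pi \<pi> g h"
  unfolding inner_pi_def by (simp add: algebra_simps sum.distrib sum_distrib_left)

lemma inner_pi_add_scaled_self:
  "inner_pi \<pi> (\<lambda>x. f x + t * g x) (\<lambda>x. f x + t * g x) =
   inner_pi \<pi> f f + 2 * t * inner_pi \<pi> f g + t\<^sup>2 * inner_pi \<pi> g g"
  unfolding inner_pi_def
  by (simp add: algebra_simps power2_eq_square sum.distrib sum_distrib_left)

lemma inner_pi_zero_left [simp]: "inner_pi \<pi> (\<lambda>x. 0) g = 0"
  unfolding inner_pi_def by simp

lemma inner_pi_zero_right [simp]: "inner_pi \<pi> f (\<lambda>x. 0) = 0"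
  unfolding inner_pi_def by simp

lemma inner_pi_self_nonneg:
  assumes "\<And>x. 0 < \<pi> x" shows "0 \<le> inner_pi \<pi> f f"
  unfolding inner_pi_def using assms by (intro sum_nonneg) (simp add: less_imp_le)

lemma inner_pi_self_eq_0_iff:
  assumes pos: "\<And>x. 0 < \<pi> x" shows "inner_pi \<pi> f f = 0 \<longleftrightarrow> f = (\<lambda>x. 0)"
proof
  assume "inner_pi \<pi> f f = 0"
  then have "\<forall>x\<in>UNIV. f x * f x * \<pi> x = 0"
    unfolding inner_pi_def using pos by (subst sum_nonneg_eq_0_iff[symmetric]) (auto simp: less_imp_le)
  then have "f x = 0" for x using pos[of x] by (metis UNIV_I mult_eq_0_iff order_less_irrefl)
  then show "f = (\<lambda>x. 0)" by blast
qed simp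

lemma inner_pi_self_pos:
  assumes "\<And>x. 0 < \<pi> x" and "f \<noteq> (\<lambda>x. 0)" shows "0 < inner_pi \<pi> f f"
  using assms inner_pi_self_nonneg[of \<pi> f] inner_pi_self_eq_0_iff[of \<pi> f] by fastforce

lemma inner_pi_le_norm_pi:
  assumes pos: "\<And>x. 0 < \<pi> x" shows "inner_pi \<pi> f g \<le> norm_pi \<pi> f * norm_pi \<pi> g"
proof -
  have weighted: "inner_pi \<pi> f g = (\<Sum>x\<in>UNIV. (f x * sqrt (\<pi> x)) * (g x * sqrt (\<pi> x)))"
    "inner_pi \<pi> h h = (\<Sum>x\<in>UNIV. (h x * sqrt (\<pi> x))\<^sup>2)" for h
    unfolding inner_pi_def using pos by (auto intro!: sum.cong simp: less_imp_le power2_eq_square)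
  have "(inner_pi \<pi> f g)\<^sup>2 \<le> inner_pi \<pi> f f * inner_pi \<pi> g g"
    unfolding weighted by (rule Cauchy_Schwarz_ineq_sum)
  then have "\<bar>inner_pi \<pi> f g\<bar> \<le> sqrt (inner_pi \<pi> f f * inner_pi \<pi> g g)"
    using real_sqrt_le_mono by fastforce
  then show ?thesis unfolding norm_pi_def real_sqrt_mult by linarith
qed

lemma inner_pi_normalize:
  assumes "0 < inner_pi \<pi> f f"
  shows "inner_pi \<pi> (\<lambda>x. (1 / sqrt (inner_pi \<pi> f f)) * f x) (\<lambda>x. (1 / sqrt (inner_pi \<pi> f f)) * f x) = 1"
  unfolding inner_pi_scale_left inner_pi_scale_right using assms
  by (simp add: power2_eq_square[symmetric])

lemma inner_pi_eqI:
  assumes pos: "\<And>x. 0 < \<pi> x" and eq: "\<And>h. inner_pi \<pi> f h = inner_pi \<pi> g h"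
  shows "f = g"
proof -
  have "inner_pi \<pi> (\<lambda>x. f x - g x) (\<lambda>x. f x - g x) = 0"
    unfolding inner_pi_diff_left eq[of "\<lambda>x. f x - g x"] by simp
  then have "(\<lambda>x. f x - g x) = (\<lambda>x. 0)" by (simp only: inner_pi_self_eq_0_iff[of \<pi>, OF pos])
  then show ?thesis by (simp add: fun_eq_iff)
qed

lemma pi_set_pos:
  fixes \<pi> :: "'a::finite \<Rightarrow> real"
  assumes "\<And>x. 0 < \<pi> x" and "x \<in> A" shows "0 < pi_set \<pi> A"
  unfolding pi_set_def using assms by (intro sum_pos) auto

section \<open>Averaging over the blocks of a partition\<close>

lemma sum_UNIV_if_mem:
  fixes h :: "'a::finite \<Rightarrow> real"
  shows "(\<Sum>y\<in>UNIV. if y \<in> A then h y else 0) = (\<Sum>y\<in>A. h y)"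
  by (simp add: sum.If_cases)

definition block_avg :: "('a \<Rightarrow> real) \<Rightarrow> ('a \<Rightarrow> 'a set) \<Rightarrow> ('a \<Rightarrow> real) \<Rightarrow> 'a \<Rightarrow> real" where
  "block_avg \<pi> Ob f x = (\<Sum>y\<in>Ob x. \<pi> y * f y) / pi_set \<pi> (Ob x)"

lemma block_avg_add_scaled:
  "block_avg \<pi> Ob (\<lambda>x. f x + t * g x) = (\<lambda>x. block_avg \<pi> Ob f x + t * block_avg \<pi> Ob g x)"
  unfolding block_avg_def
  by (simp add: algebra_simps sum.distrib sum_distrib_left add_divide_distrib)

lemma block_avg_scale: "block_avg \<pi> Ob (\<lambda>x. c * f x) = (\<lambda>x. c * block_avg \<pi> Ob f x)"
  unfolding block_avg_def by (simp add: algebra_simps sum_distrib_left)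

lemma block_avg_zero [simp]: "block_avg \<pi> Ob (\<lambda>x. 0) = (\<lambda>x. 0)"
  unfolding block_avg_def by simp

lemma gibbs_op_eq_block_avg: "gibbs_op \<pi> G \<phi> = block_avg \<pi> (orbit G \<phi>)"
proof (intro ext)
  fix f x
  have "gibbs_op \<pi> G \<phi> f x =
      (\<Sum>y\<in>UNIV. if y \<in> orbit G \<phi> x then \<pi> y * f y / pi_set \<pi> (orbit G \<phi> x) else 0)"
    unfolding gibbs_op_def gibbs_kernel_def by (rule sum.cong) auto
  then show "gibbs_op \<pi> G \<phi> f x = block_avg \<pi> (orbit G \<phi>) f x"
    unfolding block_avg_def sum_UNIV_if_mem by (simp add: sum_divide_distrib)
qed

locale weighted_partition =
  fixes \<pi> :: "'a::finite \<Rightarrow> real" and Ob :: "'a \<Rightarrow> 'a set"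
  assumes pos: "\<And>x. 0 < \<pi> x"
    and in_own_block: "\<And>x. x \<in> Ob x"
    and block_eq: "\<And>x y. y \<in> Ob x \<Longrightarrow> Ob y = Ob x"
begin

lemma in_block_commute: "y \<in> Ob x \<longleftrightarrow> x \<in> Ob y"
  using in_own_block[of x] in_own_block[of y] block_eq[of y x] block_eq[of x y] by blast

lemma pi_set_block_pos: "0 < pi_set \<pi> (Ob x)"
  using pi_set_pos[of \<pi>, OF pos in_own_block] .

lemma continuous_on_block_avg_vec: "continuous_on S (\<lambda>v::real^'a. block_avg \<pi> Ob (vec_nth v) x)"
  using pi_set_block_pos[of x] unfolding block_avg_def by (intro continuous_intros) auto

lemma block_avg_eq_if_const:
  assumes "\<And>y. y \<in> Ob x \<Longrightarrow> f y = f x" shows "block_avg \<pi> Ob f x = f x"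
proof -
  have "(\<Sum>y\<in>Ob x. \<pi> y * f y) = pi_set \<pi> (Ob x) * f x"
    unfolding pi_set_def by (simp add: sum_distrib_right assms)
  then show ?thesis unfolding block_avg_def using pi_set_block_pos[of x] by simp
qed

lemma block_avg_same_block: "y \<in> Ob x \<Longrightarrow> block_avg \<pi> Ob f y = block_avg \<pi> Ob f x"
  unfolding block_avg_def by (simp only: block_eq)

lemma block_avg_idem: "block_avg \<pi> Ob (block_avg \<pi> Ob f) = block_avg \<pi> Ob f"
  by (intro ext block_avg_eq_if_const block_avg_same_block)

lemma block_avg_fixed_iff: "block_avg \<pi> Ob f = f \<longleftrightarrow> (\<forall>x. \<forall>y\<in>Ob x. f y = f x)"
proof
  assume fixed: "block_avg \<pi> Ob f = f"
  show "\<forall>x. \<forall>y\<in>Ob x. f y = f x"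
    using block_avg_same_block[of _ _ f] unfolding fixed by blast
qed (intro ext block_avg_eq_if_const, blast)

lemma range_block_avg: "range (block_avg \<pi> Ob) = {f. block_avg \<pi> Ob f = f}"
proof
  show "{f. block_avg \<pi> Ob f = f} \<subseteq> range (block_avg \<pi> Ob)"
  proof
    fix f assume "f \<in> {f. block_avg \<pi> Ob f = f}"
    then have "f = block_avg \<pi> Ob f" by simp
    then show "f \<in> range (block_avg \<pi> Ob)" using rangeI[of "block_avg \<pi> Ob" f] by simp
  qed
qed (auto simp: block_avg_idem)

lemma block_avg_self_adjoint:
  "inner_pi \<pi> (block_avg \<pi> Ob f) g = inner_pi \<pi> f (block_avg \<pi> Ob g)"
proof -
  define H where "H x y = (if y \<in> Ob x then \<pi> y * f y * g x * \<pi> x / pi_set \<pi> (Ob x) else 0)"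
    for x y
  have "inner_pi \<pi> (block_avg \<pi> Ob f) g = (\<Sum>x\<in>UNIV. \<Sum>y\<in>UNIV. H x y)"
    unfolding inner_pi_def block_avg_def H_def sum_UNIV_if_mem
    by (simp add: sum_divide_distrib sum_distrib_right)
  also have "\<dots> = (\<Sum>y\<in>UNIV. \<Sum>x\<in>UNIV. H x y)"
    by (rule sum.swap)
  also have "\<dots> = (\<Sum>y\<in>UNIV. \<Sum>x\<in>UNIV.
      if x \<in> Ob y then \<pi> x * g x * f y * \<pi> y / pi_set \<pi> (Ob y) else 0)"
  proof (intro sum.cong refl)
    fix x y
    show "H x y = (if x \<in> Ob y then \<pi> x * g x * f y * \<pi> y / pi_set \<pi> (Ob y) else 0)"
    proof (cases "y \<in> Ob x")
      case True
      then have "x \<in> Ob y" "Ob y = Ob x" using in_block_commute block_eq by blast+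
      then show ?thesis unfolding H_def using True by (simp add: mult_ac)
    next
      case False
      then have "x \<notin> Ob y" using in_block_commute by blast
      then show ?thesis unfolding H_def using False by simp
    qed
  qed
  also have "\<dots> = inner_pi \<pi> f (block_avg \<pi> Ob g)"
    unfolding inner_pi_def block_avg_def sum_UNIV_if_mem
    by (simp add: sum_divide_distrib sum_distrib_right sum_distrib_left algebra_simps)
  finally show ?thesis .
qed

lemma orth_proj_fixed_block_avg:
  "orth_proj \<pi> {f. block_avg \<pi> Ob f = f} f = block_avg \<pi> Ob f"
  unfolding orth_proj_def
proof (rule the_equality)
  have "inner_pi \<pi> (f - block_avg \<pi> Ob f) h = 0" if "block_avg \<pi> Ob h = h" for h
    using block_avg_self_adjoint[of f h] that unfolding fun_diff_def inner_pi_diff_left by simp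
  then show "block_avg \<pi> Ob f \<in> {f. block_avg \<pi> Ob f = f} \<and>
      f - block_avg \<pi> Ob f \<in> orth_pi \<pi> {f. block_avg \<pi> Ob f = f}"
    unfolding orth_pi_def by (simp add: block_avg_idem)
next
  fix g
  assume g: "g \<in> {f. block_avg \<pi> Ob f = f} \<and> f - g \<in> orth_pi \<pi> {f. block_avg \<pi> Ob f = f}"
  then have g_fixed: "block_avg \<pi> Ob g = g" by simp
  show "g = block_avg \<pi> Ob f"
  proof (rule inner_pi_eqI[of \<pi>, OF pos])
    fix h
    have "inner_pi \<pi> (\<lambda>x. f x - g x) (block_avg \<pi> Ob h) = 0"
      using g block_avg_idem[of h] unfolding orth_pi_def fun_diff_def by blast
    then have "inner_pi \<pi> g (block_avg \<pi> Ob h) = inner_pi \<pi> f (block_avg \<pi> Ob h)"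
      unfolding inner_pi_diff_left by simp
    then show "inner_pi \<pi> g h = inner_pi \<pi> (block_avg \<pi> Ob f) h"
      using block_avg_self_adjoint[of g h] block_avg_self_adjoint[of f h] g_fixed by simp
  qed
qed

end

lemma weighted_partition_orbit:
  assumes "\<And>x. 0 < \<pi> x" and "group_action G UNIV \<phi>"
  shows "weighted_partition \<pi> (orbit G \<phi>)"
proof -
  interpret group_action G UNIV \<phi> by fact
  show ?thesis
  proof
    show "x \<in> orbit G \<phi> x" for x by (rule orbit_refl) simp
    show "orbit G \<phi> y = orbit G \<phi> x" if y: "y \<in> orbit G \<phi> x" for x y
    proof
      show "orbit G \<phi> y \<subseteq> orbit G \<phi> x" using orbit_trans[of x y] y by blast
      show "orbit G \<phi> x \<subseteq> orbit G \<phi> y" using orbit_trans[of y x] orbit_sym[of x y] y by blast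
    qed
  qed (rule assms(1))
qed

lemma gibbs_space_eq_fixed:
  assumes "weighted_partition \<pi> (orbit G \<phi>)"
  shows "gibbs_space \<pi> G \<phi> = {f. block_avg \<pi> (orbit G \<phi>) f = f}"
  unfolding gibbs_space_def gibbs_op_eq_block_avg by (rule weighted_partition.range_block_avg[OF assms])

section \<open>Maximising over the unit sphere\<close>

lemma bounded_inner_pi_sphere:
  assumes pos: "\<And>x. 0 < \<pi> x"
  shows "bounded {v::real^'a::finite. inner_pi \<pi> (vec_nth v) (vec_nth v) = 1}"
proof -
  have "norm v \<le> (\<Sum>i\<in>UNIV. max 1 (1 / \<pi> i))"
    if "inner_pi \<pi> (vec_nth v) (vec_nth v) = 1" for v :: "real^'a"
  proof -
    have "\<bar>vec_nth v i\<bar> \<le> max 1 (1 / \<pi> i)" for i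
    proof (cases "\<bar>vec_nth v i\<bar> \<le> 1")
      case False
      have "vec_nth v i * vec_nth v i * \<pi> i \<le> inner_pi \<pi> (vec_nth v) (vec_nth v)"
        unfolding inner_pi_def using pos by (intro member_le_sum) (auto simp: less_imp_le)
      then have "\<bar>vec_nth v i\<bar> * \<bar>vec_nth v i\<bar> \<le> 1 / \<pi> i"
        using that pos[of i] by (simp add: field_simps)
      moreover have "\<bar>vec_nth v i\<bar> * 1 \<le> \<bar>vec_nth v i\<bar> * \<bar>vec_nth v i\<bar>"
        using False by (intro mult_left_mono) auto
      ultimately show ?thesis by simp
    qed simp
    then have "(\<Sum>i\<in>UNIV. \<bar>vec_nth v i\<bar>) \<le> (\<Sum>i\<in>UNIV. max 1 (1 / \<pi> i))"
      by (intro sum_mono)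
    then show ?thesis using norm_le_l1_cart[of v] by linarith
  qed
  then show ?thesis unfolding bounded_iff by blast
qed

lemma continuous_on_inner_pi_vec: "continuous_on S (\<lambda>v::real^'a::finite. inner_pi \<pi> (vec_nth v) w)"
  unfolding inner_pi_def by (intro continuous_intros)

lemma unit_sphere_attains_max:
  fixes F :: "('a::finite \<Rightarrow> real) \<Rightarrow> real"
  assumes pos: "\<And>x. 0 < \<pi> x"
    and scale: "\<And>f c. f \<in> V \<Longrightarrow> (\<lambda>x. c * f x) \<in> V"
    and closed: "closed {v::real^'a. vec_nth v \<in> V}"
    and cont: "continuous_on UNIV (\<lambda>v::real^'a. F (vec_nth v))"
    and f1: "f1 \<in> V" "f1 \<noteq> (\<lambda>x. 0)"
  obtains f0 where "f0 \<in> V" "inner_pi \<pi> f0 f0 = 1"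
    "\<And>f. f \<in> V \<Longrightarrow> inner_pi \<pi> f f = 1 \<Longrightarrow> F f \<le> F f0"
proof -
  define K where "K = {v::real^'a. vec_nth v \<in> V} \<inter> {v. inner_pi \<pi> (vec_nth v) (vec_nth v) = 1}"
  have "closed {v::real^'a. inner_pi \<pi> (vec_nth v) (vec_nth v) = 1}"
    unfolding inner_pi_def by (intro closed_Collect_eq continuous_intros)
  then have "compact K"
    unfolding K_def compact_eq_bounded_closed using closed bounded_inner_pi_sphere[of \<pi>, OF pos]
    by (auto intro: closed_Int bounded_Int)
  define g where "g = (\<lambda>x. (1 / sqrt (inner_pi \<pi> f1 f1)) * f1 x)"
  have "g \<in> V" unfolding g_def by (rule scale[OF f1(1)])
  moreover have "inner_pi \<pi> g g = 1"
    unfolding g_def by (rule inner_pi_normalize[OF inner_pi_self_pos[of \<pi>, OF pos f1(2)]])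
  ultimately have "vec_lambda g \<in> K" unfolding K_def by (simp add: vec_lambda_inverse)
  then obtain v0 where "v0 \<in> K" and max: "\<And>v. v \<in> K \<Longrightarrow> F (vec_nth v) \<le> F (vec_nth v0)"
    using continuous_attains_sup[OF \<open>compact K\<close> _ continuous_on_subset[OF cont]] by blast
  show ?thesis
  proof
    show "vec_nth v0 \<in> V" "inner_pi \<pi> (vec_nth v0) (vec_nth v0) = 1"
      using \<open>v0 \<in> K\<close> unfolding K_def by auto
    show "F f \<le> F (vec_nth v0)" if "f \<in> V" "inner_pi \<pi> f f = 1" for f
      using max[of "vec_lambda f"] that unfolding K_def by (simp add: vec_lambda_inverse)
  qed
qed

section \<open>The cosine of two block-averaging subspaces\<close>

lemma linear_coeff_eq_0_if_quadratic_nonneg: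
  fixes a b :: real
  assumes nonneg: "\<And>t. 0 \<le> 2 * t * a + t\<^sup>2 * b" and "0 \<le> b"
  shows "a = 0"
proof -
  define t where "t = - a / (b + 1)"
  have t: "t * (b + 1) = - a"
    unfolding t_def using \<open>0 \<le> b\<close> by simp
  have "(b + 1)\<^sup>2 * (2 * t * a + t\<^sup>2 * b) = 2 * a * (b + 1) * (t * (b + 1)) + (t * (b + 1))\<^sup>2 * b"
    by (simp add: power2_eq_square algebra_simps)
  also have "\<dots> = - (a\<^sup>2 * (b + 2))"
    unfolding t by (simp add: algebra_simps power2_eq_square)
  finally have "0 \<le> - (a\<^sup>2 * (b + 2))"
    by (metis nonneg[of t] zero_le_mult_iff zero_le_power2)
  then show "a = 0" using \<open>0 \<le> b\<close> by (simp add: mult_le_0_iff)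
qed

definition avg_eigenvalues :: "('a::finite \<Rightarrow> real) \<Rightarrow> ('a \<Rightarrow> 'a set) \<Rightarrow> ('a \<Rightarrow> 'a set) \<Rightarrow> real set"
  where "avg_eigenvalues \<pi> O1 O2 = {e. \<exists>f. block_avg \<pi> O1 f = f \<and> f \<noteq> (\<lambda>x. 0) \<and>
    block_avg \<pi> O1 (block_avg \<pi> O2 f) = (\<lambda>x. e * f x)}"

locale two_partitions = P1: weighted_partition \<pi> O1 + P2: weighted_partition \<pi> O2
  for \<pi> :: "'a::finite \<Rightarrow> real" and O1 O2 :: "'a \<Rightarrow> 'a set"
begin

abbreviation "A1 \<equiv> block_avg \<pi> O1"
abbreviation "A2 \<equiv> block_avg \<pi> O2"
abbreviation "S1 \<equiv> {f. A1 f = f}"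
abbreviation "S2 \<equiv> {f. A2 f = f}"
abbreviation "U \<equiv> S1 \<inter> orth_pi \<pi> (S1 \<inter> S2)"

text \<open>For \<open>f \<in> S1\<close>, \<open>rayleigh f = \<langle>f, A1 (A2 f)\<rangle>\<close> is the numerator of the Rayleigh quotient of
  \<open>A1 \<circ> A2\<close> restricted to \<open>S1\<close>.\<close>
abbreviation "rayleigh f \<equiv> inner_pi \<pi> (A2 f) (A2 f)"

lemma rayleigh_eq_inner: "inner_pi \<pi> f (A2 f) = rayleigh f"
proof -
  have "inner_pi \<pi> (A2 f) f = rayleigh f"
    using P2.block_avg_self_adjoint[of "A2 f" f] unfolding P2.block_avg_idem .
  then show ?thesis using inner_pi_commute[of \<pi> f "A2 f"] by simp
qed

lemma rayleigh_nonneg: "0 \<le> rayleigh f"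
  by (rule inner_pi_self_nonneg[of \<pi>, OF P1.pos])

lemma rayleigh_scale: "rayleigh (\<lambda>x. c * f x) = c\<^sup>2 * rayleigh f"
  by (simp add: block_avg_scale inner_pi_scale_left inner_pi_scale_right power2_eq_square)

lemma inner_pi_diff_A2: "inner_pi \<pi> (\<lambda>x. f x - A2 f x) (\<lambda>x. f x - A2 f x) = inner_pi \<pi> f f - rayleigh f"
  unfolding inner_pi_diff_left inner_pi_diff_right rayleigh_eq_inner
  using rayleigh_eq_inner[of f] inner_pi_commute[of \<pi> "A2 f" f] by simp

lemma rayleigh_le: "rayleigh f \<le> inner_pi \<pi> f f"
  using inner_pi_diff_A2[of f] inner_pi_self_nonneg[of \<pi>, OF P1.pos, of "\<lambda>x. f x - A2 f x"] by linarith

lemma A2_fixed_if_rayleigh_eq: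
  assumes "rayleigh f = inner_pi \<pi> f f" shows "A2 f = f"
proof -
  have "(\<lambda>x. f x - A2 f x) = (\<lambda>x. 0)"
    using inner_pi_diff_A2[of f] assms inner_pi_self_eq_0_iff[of \<pi>, OF P1.pos] by simp
  then show ?thesis by (simp add: fun_eq_iff)
qed

lemma A1_A2_self_adjoint_on_S1:
  assumes "f \<in> S1" "g \<in> S1"
  shows "inner_pi \<pi> (A1 (A2 f)) g = inner_pi \<pi> f (A1 (A2 g))"
proof -
  have "inner_pi \<pi> (A1 (A2 f)) g = inner_pi \<pi> (A2 f) g"
    using P1.block_avg_self_adjoint[of "A2 f" g] assms(2) by simp
  also have "\<dots> = inner_pi \<pi> f (A2 g)" by (rule P2.block_avg_self_adjoint)
  also have "\<dots> = inner_pi \<pi> f (A1 (A2 g))"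
    using P1.block_avg_self_adjoint[of f "A2 g"] assms(1) by simp
  finally show ?thesis .
qed

lemma A1_A2_orth_fixed:
  assumes "f \<in> orth_pi \<pi> (S1 \<inter> S2)" shows "A1 (A2 f) \<in> orth_pi \<pi> (S1 \<inter> S2)"
proof -
  have "inner_pi \<pi> (A1 (A2 f)) w = 0" if "w \<in> S1 \<inter> S2" for w
  proof -
    have "inner_pi \<pi> (A1 (A2 f)) w = inner_pi \<pi> (A2 f) w"
      using P1.block_avg_self_adjoint[of "A2 f" w] that by simp
    also have "\<dots> = inner_pi \<pi> f w"
      using P2.block_avg_self_adjoint[of f w] that by simp
    finally show ?thesis using assms that unfolding orth_pi_def by simp
  qed
  then show ?thesis unfolding orth_pi_def by blast
qed

lemma avg_eigenvalue_rayleigh: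
  assumes "f \<in> S1" "A1 (A2 f) = (\<lambda>x. e * f x)"
  shows "e * inner_pi \<pi> f f = rayleigh f"
proof -
  have "inner_pi \<pi> f (A1 (A2 f)) = rayleigh f"
    using P1.block_avg_self_adjoint[of f "A2 f"] assms(1) rayleigh_eq_inner[of f] by simp
  then show ?thesis using assms(2) by (simp add: inner_pi_scale_right)
qed

lemma avg_eigenvector_in_U:
  assumes "f \<in> S1" "A1 (A2 f) = (\<lambda>x. e * f x)" "e \<noteq> 1"
  shows "f \<in> U"
proof -
  have "inner_pi \<pi> f w = 0" if "w \<in> S1 \<inter> S2" for w
  proof -
    have "inner_pi \<pi> (A1 (A2 f)) w = inner_pi \<pi> f (A1 (A2 w))"
      using A1_A2_self_adjoint_on_S1 assms(1) that by blast
    then have "e * inner_pi \<pi> f w = inner_pi \<pi> f w"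
      using assms(2) that by (simp add: inner_pi_scale_left)
    then show ?thesis using assms(3) by simp
  qed
  then show ?thesis using assms(1) unfolding orth_pi_def by blast
qed

lemma S1_orth_add_scaled:
  assumes "f \<in> S1 \<inter> orth_pi \<pi> Z" "g \<in> S1 \<inter> orth_pi \<pi> Z"
  shows "(\<lambda>x. f x + t * g x) \<in> S1 \<inter> orth_pi \<pi> Z"
  using assms unfolding orth_pi_def by (simp add: block_avg_add_scaled inner_pi_add_scaled_left)

lemma S1_orth_scale:
  assumes "f \<in> S1 \<inter> orth_pi \<pi> Z" shows "(\<lambda>x. c * f x) \<in> S1 \<inter> orth_pi \<pi> Z"
  using assms unfolding orth_pi_def by (simp add: block_avg_scale inner_pi_scale_left)

lemma closed_S1_orth: "closed {v::real^'a. vec_nth v \<in> S1 \<inter> orth_pi \<pi> Z}"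
proof -
  have "{v::real^'a. vec_nth v \<in> S1 \<inter> orth_pi \<pi> Z} =
      (\<Inter>x. {v. A1 (vec_nth v) x = vec_nth v x}) \<inter> (\<Inter>w\<in>Z. {v. inner_pi \<pi> (vec_nth v) w = 0})"
    unfolding orth_pi_def by (auto simp: fun_eq_iff)
  then show ?thesis
    by (simp only:) (intro closed_Int closed_INT ballI closed_Collect_eq continuous_intros
        P1.continuous_on_block_avg_vec continuous_on_inner_pi_vec)
qed

lemma continuous_on_rayleigh: "continuous_on UNIV (\<lambda>v::real^'a. rayleigh (vec_nth v))"
  unfolding inner_pi_def
  by (intro continuous_intros P2.continuous_on_block_avg_vec)

text \<open>The sign \<open>s\<close> lets the same lemmas treat maximisers (\<open>s = 1\<close>) and minimisers (\<open>s = -1\<close>).\<close>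
lemma rayleigh_max_homogeneous:
  assumes f0: "inner_pi \<pi> f0 f0 = 1"
    and max: "\<And>f. f \<in> S1 \<inter> orth_pi \<pi> Z \<Longrightarrow> inner_pi \<pi> f f = 1 \<Longrightarrow> s * rayleigh f \<le> s * rayleigh f0"
    and f: "f \<in> S1 \<inter> orth_pi \<pi> Z"
  shows "s * rayleigh f \<le> s * rayleigh f0 * inner_pi \<pi> f f"
proof (cases "f = (\<lambda>x. 0)")
  case False
  define c where "c = inner_pi \<pi> f f"
  have "0 < c" unfolding c_def by (rule inner_pi_self_pos[of \<pi>, OF P1.pos False])
  define g where "g = (\<lambda>x. (1 / sqrt c) * f x)"
  have "s * rayleigh g \<le> s * rayleigh f0"
  proof (rule max)
    show "g \<in> S1 \<inter> orth_pi \<pi> Z" unfolding g_def by (rule S1_orth_scale[OF f])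
    show "inner_pi \<pi> g g = 1" unfolding g_def c_def by (rule inner_pi_normalize) (use \<open>0 < c\<close> c_def in simp)
  qed
  moreover have "rayleigh g = rayleigh f / c"
    unfolding g_def rayleigh_scale using \<open>0 < c\<close> by (simp add: power_divide)
  ultimately have "s * rayleigh f / c \<le> s * rayleigh f0" by simp
  then show ?thesis using \<open>0 < c\<close> unfolding c_def[symmetric]
    by (simp add: divide_le_eq mult.commute mult.left_commute)
qed simp

text \<open>Perturbing the maximiser \<open>f0\<close> along \<open>r = rayleigh f0 \<cdot> f0 - A1 (A2 f0)\<close> gives a quadratic
  in \<open>t\<close> with nonnegative values whose linear coefficient is \<open>s \<cdot> \<langle>r, r\<rangle>\<close>; hence \<open>r = 0\<close>.\<close>
lemma rayleigh_critical_point: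
  assumes "s \<noteq> 0"
    and invariant: "\<And>f. f \<in> S1 \<inter> orth_pi \<pi> Z \<Longrightarrow> A1 (A2 f) \<in> orth_pi \<pi> Z"
    and f0: "f0 \<in> S1 \<inter> orth_pi \<pi> Z" "inner_pi \<pi> f0 f0 = 1"
    and max: "\<And>f. f \<in> S1 \<inter> orth_pi \<pi> Z \<Longrightarrow> s * rayleigh f \<le> s * rayleigh f0 * inner_pi \<pi> f f"
  shows "A1 (A2 f0) = (\<lambda>x. rayleigh f0 * f0 x)"
proof -
  define lam where "lam = rayleigh f0"
  define r where "r = (\<lambda>x. lam * f0 x - A1 (A2 f0) x)"
  have "A1 (A2 f0) \<in> S1 \<inter> orth_pi \<pi> Z" using invariant[OF f0(1)] P1.block_avg_idem by simp
  then have r_in: "r \<in> S1 \<inter> orth_pi \<pi> Z"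
    unfolding r_def using S1_orth_add_scaled[OF S1_orth_scale[OF f0(1), of lam], of _ "-1"] by simp
  have excess_nonneg: "0 \<le> s * (lam * inner_pi \<pi> h h - rayleigh h)" if "h \<in> S1 \<inter> orth_pi \<pi> Z" for h
    using max[OF that] unfolding lam_def by (simp add: algebra_simps)
  have cross: "inner_pi \<pi> (A2 f0) (A2 r) = inner_pi \<pi> (A1 (A2 f0)) r"
  proof -
    have "inner_pi \<pi> (A2 f0) (A2 r) = inner_pi \<pi> (A2 f0) r"
      using P2.block_avg_self_adjoint[of "A2 f0" r] by (simp add: P2.block_avg_idem)
    also have "\<dots> = inner_pi \<pi> (A1 (A2 f0)) r"
      using P1.block_avg_self_adjoint[of "A2 f0" r] r_in by simp
    finally show ?thesis .
  qed
  have rr: "inner_pi \<pi> r r = lam * inner_pi \<pi> f0 r - inner_pi \<pi> (A1 (A2 f0)) r"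
    unfolding r_def inner_pi_diff_left inner_pi_scale_left ..
  have "0 \<le> 2 * t * (s * inner_pi \<pi> r r) + t\<^sup>2 * (s * (lam * inner_pi \<pi> r r - rayleigh r))" for t
  proof -
    define h where "h = (\<lambda>x. f0 x + t * r x)"
    have "0 \<le> s * (lam * inner_pi \<pi> h h - rayleigh h)"
      unfolding h_def by (rule excess_nonneg[OF S1_orth_add_scaled[OF f0(1) r_in]])
    also have "inner_pi \<pi> h h = 1 + 2 * t * inner_pi \<pi> f0 r + t\<^sup>2 * inner_pi \<pi> r r"
      unfolding h_def inner_pi_add_scaled_self f0(2) ..
    also have "rayleigh h = lam + 2 * t * inner_pi \<pi> (A2 f0) (A2 r) + t\<^sup>2 * rayleigh r"
      unfolding h_def block_avg_add_scaled inner_pi_add_scaled_self lam_def ..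
    finally show ?thesis unfolding cross rr by (simp add: algebra_simps)
  qed
  then have "s * inner_pi \<pi> r r = 0"
    using linear_coeff_eq_0_if_quadratic_nonneg excess_nonneg[OF r_in] by blast
  then have "r = (\<lambda>x. 0)" using \<open>s \<noteq> 0\<close> inner_pi_self_eq_0_iff[of \<pi>, OF P1.pos] by simp
  then have "A1 (A2 f0) x = lam * f0 x" for x using fun_cong[of r _ x] unfolding r_def by simp
  then show ?thesis unfolding lam_def by (intro ext)
qed

lemma top_avg_eigenvector:
  assumes "f1 \<in> U" "f1 \<noteq> (\<lambda>x. 0)"
  obtains f0 where "f0 \<in> U" "inner_pi \<pi> f0 f0 = 1" "A1 (A2 f0) = (\<lambda>x. rayleigh f0 * f0 x)"
    "rayleigh f0 < 1" "\<And>f. f \<in> U \<Longrightarrow> rayleigh f \<le> rayleigh f0 * inner_pi \<pi> f f"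
proof -
  obtain f0 where f0: "f0 \<in> U" "inner_pi \<pi> f0 f0 = 1"
    and max: "\<And>f. f \<in> U \<Longrightarrow> inner_pi \<pi> f f = 1 \<Longrightarrow> 1 * rayleigh f \<le> 1 * rayleigh f0"
    using unit_sphere_attains_max[of \<pi> U "\<lambda>f. rayleigh f", OF P1.pos S1_orth_scale closed_S1_orth
        continuous_on_rayleigh assms] by auto
  have bound: "1 * rayleigh f \<le> 1 * rayleigh f0 * inner_pi \<pi> f f" if "f \<in> U" for f
    by (rule rayleigh_max_homogeneous[OF f0(2) max that])
  have "A1 (A2 f0) = (\<lambda>x. rayleigh f0 * f0 x)"
    by (rule rayleigh_critical_point[OF _ A1_A2_orth_fixed f0 bound]) auto
  moreover have "rayleigh f0 < 1"
  proof (rule ccontr)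
    assume "\<not> rayleigh f0 < 1"
    then have "A2 f0 = f0" using rayleigh_le[of f0] f0(2) A2_fixed_if_rayleigh_eq by simp
    then have "inner_pi \<pi> f0 f0 = 0" using f0(1) unfolding orth_pi_def by blast
    then show False using f0(2) by simp
  qed
  ultimately show ?thesis using that f0 bound by simp
qed

lemma bottom_avg_eigenvector:
  obtains g where "g \<in> S1" "g \<noteq> (\<lambda>x. 0)" "A1 (A2 g) = (\<lambda>x. rayleigh g * g x)"
    "\<And>f. f \<in> S1 \<Longrightarrow> rayleigh g * inner_pi \<pi> f f \<le> rayleigh f"
proof -
  have S1_eq: "S1 \<inter> orth_pi \<pi> {} = S1" unfolding orth_pi_def by simp
  have one: "(\<lambda>x. 1) \<in> S1 \<inter> orth_pi \<pi> {}" "(\<lambda>x::'a. 1::real) \<noteq> (\<lambda>x. 0)"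
    unfolding S1_eq by (auto intro: P1.block_avg_eq_if_const simp: fun_eq_iff)
  obtain g where g: "g \<in> S1 \<inter> orth_pi \<pi> {}" "inner_pi \<pi> g g = 1"
    and max: "\<And>f. f \<in> S1 \<inter> orth_pi \<pi> {} \<Longrightarrow> inner_pi \<pi> f f = 1 \<Longrightarrow> - rayleigh f \<le> - rayleigh g"
    using unit_sphere_attains_max[of \<pi> "S1 \<inter> orth_pi \<pi> {}" "\<lambda>f. - rayleigh f", OF P1.pos
        S1_orth_scale closed_S1_orth continuous_on_minus[OF continuous_on_rayleigh] one] by auto
  have bound: "(-1) * rayleigh f \<le> (-1) * rayleigh g * inner_pi \<pi> f f"
    if "f \<in> S1 \<inter> orth_pi \<pi> {}" for f
    by (rule rayleigh_max_homogeneous[OF g(2) _ that]) (use max in simp)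
  have "A1 (A2 g) = (\<lambda>x. rayleigh g * g x)"
    by (rule rayleigh_critical_point[OF _ _ g bound]) (simp_all add: orth_pi_def)
  moreover have "g \<noteq> (\<lambda>x. 0)" using g(2) by auto
  ultimately show ?thesis using that g bound S1_eq by simp
qed

lemma cosine_eqI:
  assumes bound: "\<And>f. f \<in> U \<Longrightarrow> rayleigh f \<le> L * inner_pi \<pi> f f" and "0 \<le> L"
    and f: "f \<in> U" "norm_pi \<pi> f \<le> 1"
    and h: "h \<in> S2 \<inter> orth_pi \<pi> (S1 \<inter> S2)" "norm_pi \<pi> h \<le> 1"
    and attained: "inner_pi \<pi> f h = sqrt L"
  shows "cosine \<pi> S1 S2 = sqrt L"
  unfolding cosine_def
proof (rule cSup_eq_maximum)
  show "sqrt L \<in> {inner_pi \<pi> f h |f h. f \<in> U \<and> h \<in> S2 \<inter> orth_pi \<pi> (S1 \<inter> S2) \<and>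
      norm_pi \<pi> f \<le> 1 \<and> norm_pi \<pi> h \<le> 1}"
    using f h attained by force
next
  fix c assume "c \<in> {inner_pi \<pi> f h |f h. f \<in> U \<and> h \<in> S2 \<inter> orth_pi \<pi> (S1 \<inter> S2) \<and>
      norm_pi \<pi> f \<le> 1 \<and> norm_pi \<pi> h \<le> 1}"
  then obtain f h where fh: "c = inner_pi \<pi> f h" "f \<in> U" "A2 h = h"
      "norm_pi \<pi> f \<le> 1" "norm_pi \<pi> h \<le> 1" by blast
  have "inner_pi \<pi> f h = inner_pi \<pi> (A2 f) h"
    using P2.block_avg_self_adjoint[of f h] fh(3) by simp
  also have "\<dots> \<le> norm_pi \<pi> (A2 f) * norm_pi \<pi> h"
    by (rule inner_pi_le_norm_pi[of \<pi>, OF P1.pos])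
  also have "\<dots> \<le> norm_pi \<pi> (A2 f)"
    using fh(5) rayleigh_nonneg[of f] by (intro mult_left_le) (auto simp: norm_pi_def)
  also have "\<dots> \<le> sqrt (L * inner_pi \<pi> f f)"
    unfolding norm_pi_def using bound[OF fh(2)] by simp
  also have "\<dots> \<le> sqrt L"
    using fh(4) \<open>0 \<le> L\<close> inner_pi_self_nonneg[of \<pi>, OF P1.pos, of f]
    by (simp add: norm_pi_def mult_left_le)
  finally show "c \<le> sqrt L" using fh(1) by simp
qed

lemma cosine_eq_0:
  assumes "\<And>f. f \<in> U \<Longrightarrow> f = (\<lambda>x. 0)" shows "cosine \<pi> S1 S2 = 0"
proof -
  have bound: "rayleigh f \<le> 0 * inner_pi \<pi> f f" if "f \<in> U" for f
    using assms[OF that] by simp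
  have zero: "(\<lambda>x. 0) \<in> S \<inter> orth_pi \<pi> (S1 \<inter> S2)" if "S = S1 \<or> S = S2" for S
    using that unfolding orth_pi_def by auto
  have "cosine \<pi> S1 S2 = sqrt 0"
    by (rule cosine_eqI[OF bound order_refl zero _ zero]) (simp_all add: norm_pi_def)
  then show ?thesis by simp
qed

lemma cosine_eq_sqrt_rayleigh:
  assumes f0: "f0 \<in> U" "inner_pi \<pi> f0 f0 = 1"
    and bound: "\<And>f. f \<in> U \<Longrightarrow> rayleigh f \<le> rayleigh f0 * inner_pi \<pi> f f"
  shows "cosine \<pi> S1 S2 = sqrt (rayleigh f0)"
proof -
  have f0_norm: "norm_pi \<pi> f0 \<le> 1" unfolding norm_pi_def f0(2) by simp
  note cosine = cosine_eqI[OF bound rayleigh_nonneg f0(1) f0_norm]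
  show ?thesis
  proof (cases "rayleigh f0 = 0")
    case True
    have "(\<lambda>x. 0) \<in> S2 \<inter> orth_pi \<pi> (S1 \<inter> S2)" unfolding orth_pi_def by simp
    then show ?thesis using cosine[of "\<lambda>x. 0"] True by (simp add: norm_pi_def)
  next
    case False
    define lam where "lam = rayleigh f0"
    have "0 < lam" using False rayleigh_nonneg[of f0] unfolding lam_def by simp
    define h where "h = (\<lambda>x. (1 / sqrt lam) * A2 f0 x)"
    have "h \<in> S2" unfolding h_def mem_Collect_eq block_avg_scale P2.block_avg_idem ..
    moreover have "inner_pi \<pi> h w = 0" if "w \<in> S1 \<inter> S2" for w
    proof -
      have "inner_pi \<pi> (A2 f0) w = inner_pi \<pi> f0 w"
        using P2.block_avg_self_adjoint[of f0 w] that by simp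
      then show ?thesis using f0(1) that unfolding h_def inner_pi_scale_left orth_pi_def by simp
    qed
    moreover have "inner_pi \<pi> h h = 1"
      unfolding h_def lam_def by (rule inner_pi_normalize) (use \<open>0 < lam\<close> lam_def in simp)
    moreover have "inner_pi \<pi> f0 h = sqrt lam"
      unfolding h_def inner_pi_scale_right rayleigh_eq_inner lam_def[symmetric]
      using \<open>0 < lam\<close> by (simp add: real_div_sqrt)
    ultimately show ?thesis using cosine[of h] unfolding norm_pi_def orth_pi_def lam_def by simp
  qed
qed

lemma cosine_eq_sqrt_Max_avg_eigenvalues:
  assumes "finite (avg_eigenvalues \<pi> O1 O2)"
  shows "cosine \<pi> S1 S2 = (if {e \<in> avg_eigenvalues \<pi> O1 O2. e < 1} = {} then 0
    else sqrt (Max {e \<in> avg_eigenvalues \<pi> O1 O2. e < 1}))"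
proof (cases "\<exists>f\<in>U. f \<noteq> (\<lambda>x. 0)")
  case True
  then obtain f1 where f1: "f1 \<in> U" "f1 \<noteq> (\<lambda>x. 0)" by blast
  obtain f0 where f0: "f0 \<in> U" "inner_pi \<pi> f0 f0 = 1"
      "A1 (A2 f0) = (\<lambda>x. rayleigh f0 * f0 x)" "rayleigh f0 < 1"
    and bound: "\<And>f. f \<in> U \<Longrightarrow> rayleigh f \<le> rayleigh f0 * inner_pi \<pi> f f"
    using top_avg_eigenvector[OF f1] by blast
  have "f0 \<noteq> (\<lambda>x. 0)" using f0(2) by auto
  then have top: "rayleigh f0 \<in> {e \<in> avg_eigenvalues \<pi> O1 O2. e < 1}"
    using f0 unfolding avg_eigenvalues_def by blast
  have "e \<le> rayleigh f0" if "e \<in> {e \<in> avg_eigenvalues \<pi> O1 O2. e < 1}" for e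
  proof -
    from that obtain f where f: "f \<in> S1" "f \<noteq> (\<lambda>x. 0)" "A1 (A2 f) = (\<lambda>x. e * f x)" "e < 1"
      unfolding avg_eigenvalues_def by blast
    have "e * inner_pi \<pi> f f = rayleigh f" by (rule avg_eigenvalue_rayleigh[OF f(1,3)])
    also have "\<dots> \<le> rayleigh f0 * inner_pi \<pi> f f"
      using bound avg_eigenvector_in_U[OF f(1,3)] f(4) by simp
    finally show ?thesis using inner_pi_self_pos[of \<pi>, OF P1.pos f(2)] by simp
  qed
  then have "Max {e \<in> avg_eigenvalues \<pi> O1 O2. e < 1} = rayleigh f0"
    using assms top by (intro Max_eqI) auto
  then show ?thesis using cosine_eq_sqrt_rayleigh[OF f0(1,2) bound] top by auto
next
  case False
  have "\<not> (e \<in> avg_eigenvalues \<pi> O1 O2 \<and> e < 1)" for e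
  proof
    assume "e \<in> avg_eigenvalues \<pi> O1 O2 \<and> e < 1"
    then obtain f where f: "f \<in> S1" "f \<noteq> (\<lambda>x. 0)" "A1 (A2 f) = (\<lambda>x. e * f x)" "e < 1"
      unfolding avg_eigenvalues_def by blast
    then show False using avg_eigenvector_in_U[OF f(1,3)] False by simp
  qed
  then show ?thesis using cosine_eq_0 False by auto
qed

lemma S1_subset_S2_if_no_avg_eigenvalue_below_1:
  assumes "{e \<in> avg_eigenvalues \<pi> O1 O2. e < 1} = {}" shows "S1 \<subseteq> S2"
proof -
  obtain g where g: "g \<in> S1" "g \<noteq> (\<lambda>x. 0)" "A1 (A2 g) = (\<lambda>x. rayleigh g * g x)"
    and bound: "\<And>f. f \<in> S1 \<Longrightarrow> rayleigh g * inner_pi \<pi> f f \<le> rayleigh f"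
    using bottom_avg_eigenvector by blast
  have "rayleigh g \<in> avg_eigenvalues \<pi> O1 O2" using g unfolding avg_eigenvalues_def by auto
  then have "1 \<le> rayleigh g" using assms by force
  show ?thesis
  proof
  fix f assume "f \<in> S1"
  have "inner_pi \<pi> f f \<le> rayleigh g * inner_pi \<pi> f f"
    using \<open>1 \<le> rayleigh g\<close> inner_pi_self_nonneg[of \<pi>, OF P1.pos, of f] by (simp add: mult_le_cancel_right1)
  also have "\<dots> \<le> rayleigh f" by (rule bound[OF \<open>f \<in> S1\<close>])
  finally have "rayleigh f = inner_pi \<pi> f f" using rayleigh_le[of f] by simp
  then show "f \<in> S2" using A2_fixed_if_rayleigh_eq by simp
  qed
qed

lemma avg_comp_eq_orth_proj_if_subset:
  assumes "S1 \<subseteq> S2"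
  shows "A1 (A2 f) = orth_proj \<pi> (S1 \<inter> S2) f" "A2 (A1 f) = orth_proj \<pi> (S1 \<inter> S2) f"
proof -
  have proj: "orth_proj \<pi> (S1 \<inter> S2) f = A1 f"
    using assms P1.orth_proj_fixed_block_avg by (simp add: Int_absorb2)
  then show "A2 (A1 f) = orth_proj \<pi> (S1 \<inter> S2) f"
    using assms P1.block_avg_idem by auto
  have "A1 (A2 f) = A1 f"
  proof (rule inner_pi_eqI[of \<pi>, OF P1.pos])
    fix g
    have "inner_pi \<pi> (A1 (A2 f)) g = inner_pi \<pi> f (A2 (A1 g))"
      using P1.block_avg_self_adjoint[of "A2 f" g] P2.block_avg_self_adjoint[of f "A1 g"] by simp
    also have "\<dots> = inner_pi \<pi> (A1 f) g"
      using assms P1.block_avg_idem[of g] P1.block_avg_self_adjoint[of f g] by auto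
    finally show "inner_pi \<pi> (A1 (A2 f)) g = inner_pi \<pi> (A1 f) g" .
  qed
  then show "A1 (A2 f) = orth_proj \<pi> (S1 \<inter> S2) f" using proj by simp
qed

lemma avg_comp_eq_orth_proj_if_nested:
  assumes "S1 \<subseteq> S2 \<or> S2 \<subseteq> S1"
  shows "A1 (A2 f) = orth_proj \<pi> (S1 \<inter> S2) f \<and> A2 (A1 f) = orth_proj \<pi> (S1 \<inter> S2) f"
proof (cases "S1 \<subseteq> S2")
  case True
  then show ?thesis using avg_comp_eq_orth_proj_if_subset by blast
next
  case False
  interpret swapped: two_partitions \<pi> O2 O1
    by (simp add: two_partitions_def P1.weighted_partition_axioms P2.weighted_partition_axioms)
  show ?thesis
    using swapped.avg_comp_eq_orth_proj_if_subset[of f] assms False by (simp add: Int_commute)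
qed

end

section \<open>Enumerated blocks and the overlap matrix\<close>

text \<open>The normalised block indicators \<open>1\<^bsub>Orb i\<^esub> / sqrt (\<pi>(Orb i))\<close> form an orthonormal basis of the
  functions constant on blocks; \<open>block_fun\<close> maps coordinates in this basis to functions.\<close>
definition block_fun :: "('a \<Rightarrow> real) \<Rightarrow> (nat \<Rightarrow> 'a set) \<Rightarrow> nat \<Rightarrow> real Matrix.vec \<Rightarrow> 'a \<Rightarrow> real" where
  "block_fun \<pi> Orb k a x = (\<Sum>i<k. if x \<in> Orb i then vec_index a i / sqrt (pi_set \<pi> (Orb i)) else 0)"

lemma block_fun_zero: "block_fun \<pi> Orb k (0\<^sub>v k) = (\<lambda>x. 0)"
  unfolding block_fun_def by (intro ext sum.neutral) simp

lemma block_fun_smult: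
  assumes "dim_vec a = k"
  shows "block_fun \<pi> Orb k (e \<cdot>\<^sub>v a) = (\<lambda>x. e * block_fun \<pi> Orb k a x)"
  unfolding block_fun_def sum_distrib_left using assms by (intro ext sum.cong) auto

lemma sum_weighted_block_fun:
  "(\<Sum>y\<in>C. \<pi> y * block_fun \<pi> Orb k a y) =
    (\<Sum>i<k. vec_index a i * (pi_set \<pi> (Orb i \<inter> C) / sqrt (pi_set \<pi> (Orb i))))"
  if "finite C"
proof -
  have "(\<Sum>y\<in>C. \<pi> y * block_fun \<pi> Orb k a y) =
      (\<Sum>i<k. \<Sum>y\<in>C. if y \<in> Orb i then \<pi> y * (vec_index a i / sqrt (pi_set \<pi> (Orb i))) else 0)"
    unfolding block_fun_def sum_distrib_left by (subst sum.swap) (auto intro!: sum.cong)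
  also have "\<dots> = (\<Sum>i<k. vec_index a i * (pi_set \<pi> (Orb i \<inter> C) / sqrt (pi_set \<pi> (Orb i))))"
    unfolding sum.inter_restrict[OF that, symmetric] pi_set_def Int_commute[of C]
    by (intro sum.cong refl) (simp add: sum_divide_distrib[symmetric] sum_distrib_right[symmetric] mult_ac)
  finally show ?thesis .
qed

definition overlap_mat :: "('a \<Rightarrow> real) \<Rightarrow> (nat \<Rightarrow> 'a set) \<Rightarrow> nat \<Rightarrow> (nat \<Rightarrow> 'a set) \<Rightarrow> nat \<Rightarrow> real mat"
  where "overlap_mat \<pi> OrbA kA OrbB kB = mat kB kA (\<lambda>(j, i).
    pi_set \<pi> (OrbA i \<inter> OrbB j) / sqrt (pi_set \<pi> (OrbA i) * pi_set \<pi> (OrbB j)))"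

lemma dim_overlap_mat [simp]:
  "dim_row (overlap_mat \<pi> OrbA kA OrbB kB) = kB" "dim_col (overlap_mat \<pi> OrbA kA OrbB kB) = kA"
  unfolding overlap_mat_def by simp_all

lemma overlap_mat_carrier: "overlap_mat \<pi> OrbA kA OrbB kB \<in> carrier_mat kB kA"
  by (rule carrier_matI) simp_all

lemma transpose_overlap_mat: "transpose_mat (overlap_mat \<pi> OrbA kA OrbB kB) = overlap_mat \<pi> OrbB kB OrbA kA"
  unfolding overlap_mat_def by (rule eq_matI) (auto simp: Int_commute mult.commute)

locale enumerated_partition = weighted_partition +
  fixes Orb :: "nat \<Rightarrow> 'a::finite set" and k :: nat
  assumes enum: "bij_betw Orb {..<k} (range Ob)"
begin

lemma enum_block_index: "\<exists>i<k. Orb i = Ob x"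
  using enum unfolding bij_betw_def by (metis imageE lessThan_iff rangeI)

lemma enum_block_eq:
  assumes "i < k" obtains y where "Orb i = Ob y"
proof -
  have "Orb i \<in> range Ob" using enum assms unfolding bij_betw_def by blast
  then show ?thesis using that by blast
qed

lemma mem_enum_block_iff:
  assumes "i < k" shows "x \<in> Orb i \<longleftrightarrow> Orb i = Ob x"
proof -
  obtain y where y: "Orb i = Ob y" using enum_block_eq[OF assms] .
  show ?thesis using block_eq[of x y] in_own_block[of x] unfolding y by auto
qed

lemma enum_block_unique:
  assumes "i < k" "j < k" "x \<in> Orb i" "x \<in> Orb j" shows "i = j"
  using assms mem_enum_block_iff enum unfolding bij_betw_def inj_on_def by auto

lemma pi_set_enum_block_pos:
  assumes "i < k" shows "0 < pi_set \<pi> (Orb i)"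
  using enum_block_eq[OF assms] pi_set_block_pos by metis

lemma block_fun_eval:
  assumes "i < k" "x \<in> Orb i"
  shows "block_fun \<pi> Orb k a x = vec_index a i / sqrt (pi_set \<pi> (Orb i))"
proof -
  have "block_fun \<pi> Orb k a x =
      (\<Sum>j<k. if j = i then vec_index a j / sqrt (pi_set \<pi> (Orb j)) else 0)"
    unfolding block_fun_def using assms enum_block_unique by (intro sum.cong) auto
  then show ?thesis using assms(1) by simp
qed

lemma block_fun_fixed: "block_avg \<pi> Ob (block_fun \<pi> Orb k a) = block_fun \<pi> Orb k a"
proof -
  have "block_fun \<pi> Orb k a y = block_fun \<pi> Orb k a x" if "y \<in> Ob x" for x y
    unfolding block_fun_def block_eq[OF that]
    using mem_enum_block_iff block_eq[OF that] by (intro sum.cong) auto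
  then show ?thesis using block_avg_fixed_iff by blast
qed

lemma block_fun_inj:
  assumes "dim_vec a = k" "dim_vec b = k" "block_fun \<pi> Orb k a = block_fun \<pi> Orb k b"
  shows "a = b"
proof (rule eq_vecI)
  fix i assume "i < dim_vec b"
  then have i: "i < k" using assms by simp
  obtain x where x: "Orb i = Ob x" using enum_block_eq[OF i] .
  then have "x \<in> Orb i" using in_own_block by simp
  then show "vec_index a i = vec_index b i"
    using block_fun_eval[OF i] assms(3) pi_set_enum_block_pos[OF i] by (metis divide_cancel_right
        less_irrefl real_sqrt_eq_zero_cancel_iff)
qed (use assms in simp)

lemma block_fun_surj:
  assumes "block_avg \<pi> Ob f = f"
  obtains a where "a \<in> carrier_vec k" "f = block_fun \<pi> Orb k a"
proof
  define r where "r i = (SOME x. x \<in> Orb i)" for i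
  have r: "r i \<in> Orb i" if "i < k" for i
    unfolding r_def using enum_block_eq[OF that] in_own_block by (metis someI)
  define a where "a = Matrix.vec k (\<lambda>i. f (r i) * sqrt (pi_set \<pi> (Orb i)))"
  show "a \<in> carrier_vec k" unfolding a_def by simp
  show "f = block_fun \<pi> Orb k a"
  proof
    fix x
    obtain i where i: "i < k" "Orb i = Ob x" using enum_block_index by blast
    have "block_fun \<pi> Orb k a x = f (r i)"
      using block_fun_eval[OF i(1)] i in_own_block pi_set_enum_block_pos[OF i(1)] unfolding a_def by simp
    also have "\<dots> = f x"
      using assms r[OF i(1)] i(2) unfolding block_avg_fixed_iff by simp
    finally show "f x = block_fun \<pi> Orb k a x" ..
  qed
qed

end

lemma enumerated_partition_orbits:
  assumes "\<And>x. 0 < \<pi> x" "group_action G UNIV \<phi>" "bij_betw Orb {..<k} (orbits G UNIV \<phi>)"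
  shows "enumerated_partition \<pi> (orbit G \<phi>) Orb k"
proof -
  have "range (orbit G \<phi>) = orbits G UNIV \<phi>" unfolding orbits_def by auto
  then show ?thesis using assms(3) weighted_partition_orbit[of \<pi>, OF assms(1,2)]
    by (simp add: enumerated_partition_def enumerated_partition_axioms_def)
qed

lemma block_avg_block_fun:
  assumes A: "enumerated_partition \<pi> OA OrbA kA" and B: "enumerated_partition \<pi> OB OrbB kB"
    and a: "dim_vec a = kA"
  shows "block_avg \<pi> OB (block_fun \<pi> OrbA kA a) =
    block_fun \<pi> OrbB kB (overlap_mat \<pi> OrbA kA OrbB kB *\<^sub>v a)"
proof
  fix x
  interpret B: enumerated_partition \<pi> OB OrbB kB by (rule B)
  obtain j where j: "j < kB" "OrbB j = OB x" using B.enum_block_index by blast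
  define C where "C = OB x"
  have "0 < pi_set \<pi> C" unfolding C_def by (rule B.pi_set_block_pos)
  have A_pos: "0 < pi_set \<pi> (OrbA i)" if "i < kA" for i
    by (rule enumerated_partition.pi_set_enum_block_pos[OF A that])
  have "block_avg \<pi> OB (block_fun \<pi> OrbA kA a) x =
      (\<Sum>i<kA. vec_index a i * (pi_set \<pi> (OrbA i \<inter> C) / sqrt (pi_set \<pi> (OrbA i)))) / pi_set \<pi> C"
    unfolding block_avg_def C_def by (simp add: sum_weighted_block_fun)
  also have "\<dots> = (\<Sum>i<kA. pi_set \<pi> (OrbA i \<inter> C) / sqrt (pi_set \<pi> (OrbA i) * pi_set \<pi> C) *
      vec_index a i) / sqrt (pi_set \<pi> C)"
    unfolding sum_divide_distrib
  proof (intro sum.cong refl)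
    fix i assume "i \<in> {..<kA}"
    have "sqrt (pi_set \<pi> C) * sqrt (pi_set \<pi> C) = pi_set \<pi> C" using \<open>0 < pi_set \<pi> C\<close> by simp
    then show "vec_index a i * (pi_set \<pi> (OrbA i \<inter> C) / sqrt (pi_set \<pi> (OrbA i))) / pi_set \<pi> C =
        pi_set \<pi> (OrbA i \<inter> C) / sqrt (pi_set \<pi> (OrbA i) * pi_set \<pi> C) * vec_index a i /
          sqrt (pi_set \<pi> C)"
      using A_pos[of i] \<open>i \<in> {..<kA}\<close> \<open>0 < pi_set \<pi> C\<close>
      unfolding real_sqrt_mult by (simp add: field_simps)
  qed
  also have "\<dots> = block_fun \<pi> OrbB kB (overlap_mat \<pi> OrbA kA OrbB kB *\<^sub>v a) x"
  proof -
    have "vec_index (overlap_mat \<pi> OrbA kA OrbB kB *\<^sub>v a) j =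
        (\<Sum>i<kA. pi_set \<pi> (OrbA i \<inter> C) / sqrt (pi_set \<pi> (OrbA i) * pi_set \<pi> C) * vec_index a i)"
      using j a unfolding overlap_mat_def C_def
      by (auto simp: scalar_prod_def lessThan_atLeast0 intro!: sum.cong)
    then show ?thesis using B.block_fun_eval[OF j(1)] j(2) B.in_own_block unfolding C_def by simp
  qed
  finally show "block_avg \<pi> OB (block_fun \<pi> OrbA kA a) x =
      block_fun \<pi> OrbB kB (overlap_mat \<pi> OrbA kA OrbB kB *\<^sub>v a) x" .
qed

lemma block_avg_comp_block_fun:
  assumes A: "enumerated_partition \<pi> OA OrbA kA" and B: "enumerated_partition \<pi> OB OrbB kB"
    and v: "v \<in> carrier_vec kA"
  shows "block_avg \<pi> OA (block_avg \<pi> OB (block_fun \<pi> OrbA kA v)) =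
    block_fun \<pi> OrbA kA ((transpose_mat (overlap_mat \<pi> OrbA kA OrbB kB) *
      overlap_mat \<pi> OrbA kA OrbB kB) *\<^sub>v v)"
proof -
  let ?M = "overlap_mat \<pi> OrbA kA OrbB kB"
  have M: "?M \<in> carrier_mat kB kA" by (rule overlap_mat_carrier)
  have "block_avg \<pi> OA (block_avg \<pi> OB (block_fun \<pi> OrbA kA v)) =
      block_fun \<pi> OrbA kA (transpose_mat ?M *\<^sub>v (?M *\<^sub>v v))"
    using block_avg_block_fun[OF A B, of v] block_avg_block_fun[OF B A, of "?M *\<^sub>v v"] M v
    unfolding transpose_overlap_mat by simp
  also have "transpose_mat ?M *\<^sub>v (?M *\<^sub>v v) = (transpose_mat ?M * ?M) *\<^sub>v v"
    using M v by simp
  finally show ?thesis .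
qed

lemma eigenvalue_overlap_gram_iff:
  assumes A: "enumerated_partition \<pi> OA OrbA kA" and B: "enumerated_partition \<pi> OB OrbB kB"
  shows "eigenvalue (transpose_mat (overlap_mat \<pi> OrbA kA OrbB kB) * overlap_mat \<pi> OrbA kA OrbB kB) e
    \<longleftrightarrow> e \<in> avg_eigenvalues \<pi> OA OB"
proof -
  interpret A: enumerated_partition \<pi> OA OrbA kA by (rule A)
  let ?G = "transpose_mat (overlap_mat \<pi> OrbA kA OrbB kB) * overlap_mat \<pi> OrbA kA OrbB kB"
  have G: "?G \<in> carrier_mat kA kA" using overlap_mat_carrier[of \<pi> OrbA kA OrbB kB] by simp
  note comp = block_avg_comp_block_fun[OF A B]
  show ?thesis
  proof
    assume "eigenvalue ?G e"
    then obtain v where v: "v \<in> carrier_vec kA" "v \<noteq> 0\<^sub>v kA" "?G *\<^sub>v v = e \<cdot>\<^sub>v v"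
      unfolding eigenvalue_def eigenvector_def using G by auto
    have "block_fun \<pi> OrbA kA v \<noteq> (\<lambda>x. 0)"
      using A.block_fun_inj[of v "0\<^sub>v kA"] v(1,2) by (auto simp: block_fun_zero)
    moreover have "block_avg \<pi> OA (block_avg \<pi> OB (block_fun \<pi> OrbA kA v)) =
        (\<lambda>x. e * block_fun \<pi> OrbA kA v x)"
      unfolding comp[OF v(1)] v(3) using v(1) by (simp add: block_fun_smult)
    ultimately show "e \<in> avg_eigenvalues \<pi> OA OB"
      unfolding avg_eigenvalues_def using A.block_fun_fixed by blast
  next
    assume "e \<in> avg_eigenvalues \<pi> OA OB"
    then obtain f where f: "block_avg \<pi> OA f = f" "f \<noteq> (\<lambda>x. 0)"
      "block_avg \<pi> OA (block_avg \<pi> OB f) = (\<lambda>x. e * f x)"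
      unfolding avg_eigenvalues_def by blast
    obtain v where v: "v \<in> carrier_vec kA" "f = block_fun \<pi> OrbA kA v"
      using A.block_fun_surj[OF f(1)] .
    have "v \<noteq> 0\<^sub>v kA" using f(2) v(2) by (auto simp: block_fun_zero)
    moreover have "?G *\<^sub>v v = e \<cdot>\<^sub>v v"
      using comp[OF v(1)] f(3) v G by (intro A.block_fun_inj) (auto simp: block_fun_smult)
    ultimately show "eigenvalue ?G e"
      unfolding eigenvalue_def eigenvector_def using v(1) G by auto
  qed
qed

lemma cosine_commute: "cosine \<pi> S1 S2 = cosine \<pi> S2 S1"
  unfolding cosine_def Int_commute[of S2 S1]
  by (rule arg_cong[where f = Sup]) (metis (no_types, opaque_lifting) inner_pi_commute)

lemma cosine_eq_Max_sqrt_gram_eigenvalues: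
  assumes A: "enumerated_partition \<pi> OA OrbA kA" and B: "enumerated_partition \<pi> OB OrbB kB"
  defines "SV \<equiv> {\<sigma> \<in> {sqrt e |e. eigenvalue (transpose_mat (overlap_mat \<pi> OrbA kA OrbB kB) *
    overlap_mat \<pi> OrbA kA OrbB kB) e}. \<sigma> < 1}"
  shows "cosine \<pi> {f. block_avg \<pi> OA f = f} {f. block_avg \<pi> OB f = f} = (if SV = {} then 0 else Max SV) \<and>
    (SV = {} \<longrightarrow> {f. block_avg \<pi> OA f = f} \<subseteq> {f. block_avg \<pi> OB f = f})"
proof -
  interpret two_partitions \<pi> OA OB
    using A B by (simp add: two_partitions_def enumerated_partition_def)
  define E where "E = {e \<in> avg_eigenvalues \<pi> OA OB. e < 1}"
  have SV: "SV = sqrt ` E" unfolding SV_def E_def eigenvalue_overlap_gram_iff[OF A B] by auto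
  let ?G = "transpose_mat (overlap_mat \<pi> OrbA kA OrbB kB) * overlap_mat \<pi> OrbA kA OrbB kB"
  have "?G \<in> carrier_mat kA kA" using overlap_mat_carrier[of \<pi> OrbA kA OrbB kB] by simp
  moreover have "avg_eigenvalues \<pi> OA OB = spectrum ?G"
    unfolding spectrum_def using eigenvalue_overlap_gram_iff[OF A B] by auto
  ultimately have "finite (avg_eigenvalues \<pi> OA OB)" using card_finite_spectrum(1) by metis
  moreover have "mono sqrt" by (simp add: monoI)
  ultimately have "E \<noteq> {} \<Longrightarrow> sqrt (Max E) = Max SV"
    unfolding SV E_def by (intro mono_Max_commute) auto
  then show ?thesis
    using cosine_eq_sqrt_Max_avg_eigenvalues S1_subset_S2_if_no_avg_eigenvalue_below_1
      \<open>finite (avg_eigenvalues \<pi> OA OB)\<close> unfolding SV E_def by auto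
qed

lemma cosine_eq_Max_singular_values:
  assumes A: "enumerated_partition \<pi> OA OrbA kA" and B: "enumerated_partition \<pi> OB OrbB kB"
  defines "SV \<equiv> {\<sigma> \<in> singular_values (overlap_mat \<pi> OrbA kA OrbB kB). \<sigma> < 1}"
  shows "cosine \<pi> {f. block_avg \<pi> OA f = f} {f. block_avg \<pi> OB f = f} = (if SV = {} then 0 else Max SV) \<and>
    (SV = {} \<longrightarrow> {f. block_avg \<pi> OA f = f} \<subseteq> {f. block_avg \<pi> OB f = f} \<or>
      {f. block_avg \<pi> OB f = f} \<subseteq> {f. block_avg \<pi> OA f = f})"
proof (cases "kA \<le> kB")
  case True
  then show ?thesis
    using cosine_eq_Max_sqrt_gram_eigenvalues[OF A B] overlap_mat_carrier[of \<pi> OrbA kA OrbB kB]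
    unfolding SV_def singular_values_def by auto
next
  case False
  have "overlap_mat \<pi> OrbA kA OrbB kB * transpose_mat (overlap_mat \<pi> OrbA kA OrbB kB) =
      transpose_mat (overlap_mat \<pi> OrbB kB OrbA kA) * overlap_mat \<pi> OrbB kB OrbA kA"
    unfolding transpose_overlap_mat[symmetric, of \<pi> OrbA kA OrbB kB] by simp
  then show ?thesis
    using False cosine_eq_Max_sqrt_gram_eigenvalues[OF B A] overlap_mat_carrier[of \<pi> OrbA kA OrbB kB]
      cosine_commute[of \<pi> "{f. block_avg \<pi> OA f = f}"]
    unfolding SV_def singular_values_def by auto
qed

theorem proposition8p6:
  fixes \<pi> :: "'a::finite \<Rightarrow> real"
    and G1 :: "('g, 'm) monoid_scheme" and \<phi>1 :: "'g \<Rightarrow> 'a \<Rightarrow> 'a"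
    and G2 :: "('h, 'n) monoid_scheme" and \<phi>2 :: "'h \<Rightarrow> 'a \<Rightarrow> 'a"
    and Orb :: "nat \<Rightarrow> 'a set" and Cl :: "nat \<Rightarrow> 'a set" and k1 k2 :: nat
    and T :: "real mat"
  assumes pos: "\<And>x. \<pi> x > 0"
    and prob: "(\<Sum>x\<in>UNIV. \<pi> x) = 1"
    and act1: "group_action G1 UNIV \<phi>1"
    and act2: "group_action G2 UNIV \<phi>2"
    and O_enum: "bij_betw Orb {..<k1} (orbits G1 UNIV \<phi>1)"
    and C_enum: "bij_betw Cl {..<k2} (orbits G2 UNIV \<phi>2)"
    and T_def: "T = mat k2 k1 (\<lambda>(j, i). pi_set \<pi> (Orb i \<inter> Cl j) / sqrt (pi_set \<pi> (Orb i) * pi_set \<pi> (Cl j)))"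
  shows "cosine \<pi> (gibbs_space \<pi> G1 \<phi>1) (gibbs_space \<pi> G2 \<phi>2) =
           (if {\<sigma> \<in> singular_values T. \<sigma> < 1} = {} then 0
            else Max {\<sigma> \<in> singular_values T. \<sigma> < 1}) \<and>
         ((\<forall>\<sigma> \<in> singular_values T. \<sigma> = 1) \<longrightarrow>
           cosine \<pi> (gibbs_space \<pi> G1 \<phi>1) (gibbs_space \<pi> G2 \<phi>2) = 0 \<and>
           (\<forall>f. gibbs_op \<pi> G1 \<phi>1 (gibbs_op \<pi> G2 \<phi>2 f) =
                orth_proj \<pi> (gibbs_space \<pi> G1 \<phi>1 \<inter> gibbs_space \<pi> G2 \<phi>2) f) \<and>
           (\<forall>f. gibbs_op \<pi> G2 \<phi>2 (gibbs_op \<pi> G1 \<phi>1 f) =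
                orth_proj \<pi> (gibbs_space \<pi> G1 \<phi>1 \<inter> gibbs_space \<pi> G2 \<phi>2) f))"
proof -
  have A: "enumerated_partition \<pi> (orbit G1 \<phi>1) Orb k1"
    by (rule enumerated_partition_orbits[of \<pi>, OF pos act1 O_enum])
  have B: "enumerated_partition \<pi> (orbit G2 \<phi>2) Cl k2"
    by (rule enumerated_partition_orbits[of \<pi>, OF pos act2 C_enum])
  interpret two_partitions \<pi> "orbit G1 \<phi>1" "orbit G2 \<phi>2"
    using A B by (simp add: two_partitions_def enumerated_partition_def)
  have spaces: "gibbs_space \<pi> G1 \<phi>1 = {f. block_avg \<pi> (orbit G1 \<phi>1) f = f}"
      "gibbs_space \<pi> G2 \<phi>2 = {f. block_avg \<pi> (orbit G2 \<phi>2) f = f}"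
    by (simp_all add: gibbs_space_eq_fixed P1.weighted_partition_axioms P2.weighted_partition_axioms)
  have "T = overlap_mat \<pi> Orb k1 Cl k2" unfolding T_def overlap_mat_def ..
  then show ?thesis
    unfolding spaces gibbs_op_eq_block_avg
    using cosine_eq_Max_singular_values[OF A B] avg_comp_eq_orth_proj_if_nested by auto
qed

end
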